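(* Let $(n,k,\mathfrak s)$ be natural numbers $n\geqslant k\geqslant 3$ and a sign $\mathfrak s\in\{+1,-1\}$ satisfying: if $k$ is odd then $\mathfrak s=+1$; $(n,k,\mathfrak s)\neq (6,6,+1)$; and $k \leqslant n/2$. Then there exist $a,b\in S_n$, both of order $k$ and both of sign $\mathfrak s$, such that $\langle a,b\rangle$ is transitive on $\{1,\dots,n\}$ and $a^{-1}b$ is a cycle (i.e. a single nontrivial cycle together with fixed points).
   Context: A permutation in $S_n$ has sign $+1$ if it is even and sign $-1$ if it is odd. *)

theory Defs
  imports "HOL-Combinatorics.Combinatorics"
begin

definition perm_order :: "(nat \<Rightarrow> nat) \<Rightarrow> nat" where
  "perm_order p = (LEAST m. m > 0 \<and> (p ^^ m) = id)"

inductive_set gen2 :: "(nat \<Rightarrow> nat) \<Rightarrow> (nat \<Rightarrow> nat) \<Rightarrow> (nat \<Rightarrow> nat) set"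
  for a b where
  gen_id: "id \<in> gen2 a b"
| gen_a: "a \<in> gen2 a b"
| gen_b: "b \<in> gen2 a b"
| gen_comp: "g \<in> gen2 a b \<Longrightarrow> h \<in> gen2 a b \<Longrightarrow> g \<circ> h \<in> gen2 a b"
| gen_inv: "g \<in> gen2 a b \<Longrightarrow> inv g \<in> gen2 a b"

definition transitive_on :: "(nat \<Rightarrow> nat) set \<Rightarrow> nat set \<Rightarrow> bool" where
  "transitive_on G S = (\<forall>i\<in>S. \<forall>j\<in>S. \<exists>g\<in>G. g i = j)"

definition is_cycle_perm :: "(nat \<Rightarrow> nat) \<Rightarrow> bool" where
  "is_cycle_perm p = (\<exists>cs. distinct cs \<and> length cs \<ge> 2 \<and> p = cycle_of_list cs)"

end

theory Submission
  imports Defs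
begin

text \<open>
  The pairs are built inductively, keeping \<open>inv a \<circ> b\<close> a single cycle \<open>c\<close> and every point
  reachable from 1 under \<open>a\<close> and \<open>c\<close>. One starts from a \<open>k\<close>-cycle \<open>a\<close> and
  \<open>b = (2 3) a (2 3)\<close>, so that \<open>c = (1 2 3)\<close>. Two moves enlarge the support: adding to \<open>a\<close> a
  disjoint cycle \<open>C\<close> whose length divides \<open>k\<close>, and adding a fixed point of \<open>a\<close>. In both,
  \<open>b C\<close> (resp. \<open>b\<close>) is conjugated by a transposition, which splices two points into \<open>c\<close>;
  hence the orders stay \<open>k\<close> and both signs are multiplied by the sign of \<open>C\<close>.
  Writing \<open>n = q k + r\<close>, \<open>q\<close> cycles of length \<open>k\<close> and then \<open>r\<close> fixed points give the sign
  \<open>(-1) ^ (q (k - 1))\<close>; for even \<open>k\<close> the other sign is reached by trading cycles of length \<open>k\<close>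
  for transpositions, and the case \<open>k = 3\<close>, \<open>r = 2\<close> starts instead from \<open>(1 2 3)\<close> and \<open>(3 4 5)\<close>.
\<close>

declare upt_Suc [simp del]

section \<open>Orders of permutations\<close>

definition has_order :: "('a \<Rightarrow> 'a) \<Rightarrow> nat \<Rightarrow> bool" where
  "has_order f k \<longleftrightarrow> f ^^ k = id \<and> (\<forall>j. 0 < j \<and> j < k \<longrightarrow> f ^^ j \<noteq> id)"

lemma perm_order_eqI:
  assumes "has_order f k" "0 < k"
  shows "perm_order f = k"
  unfolding perm_order_def
  by (rule Least_equality) (use assms in \<open>auto simp: has_order_def not_less[symmetric]\<close>)

lemma funpow_comp_commute:
  assumes "f \<circ> g = g \<circ> f"
  shows "(f \<circ> g) ^^ n = f ^^ n \<circ> g ^^ n"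
proof -
  have fg: "g (f y) = f (g y)" for y
    using assms by (metis comp_apply)
  have "g ((f ^^ n) y) = (f ^^ n) (g y)" for n y
    by (induction n) (simp_all add: fg)
  then show ?thesis
    by (induction n) (simp_all add: fun_eq_iff)
qed

lemma funpow_conj_involution:
  assumes "p \<circ> p = id"
  shows "(p \<circ> f \<circ> p) ^^ n = p \<circ> f ^^ n \<circ> p"
proof -
  have "p (p y) = y" for y
    using assms by (metis comp_apply id_apply)
  then show ?thesis
    by (induction n) (simp_all add: assms fun_eq_iff)
qed

lemma has_order_conj_involution:
  assumes "p \<circ> p = id"
  shows "has_order (p \<circ> f \<circ> p) k \<longleftrightarrow> has_order f k"
proof -
  have "p \<circ> g \<circ> p = id \<longleftrightarrow> g = id" for g
    by (metis assms comp_assoc comp_id id_comp)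
  then show ?thesis
    by (simp add: has_order_def funpow_conj_involution[OF assms])
qed

lemma permutes_disjoint_commute:
  assumes "f permutes S" "g permutes T" "S \<inter> T = {}"
  shows "f \<circ> g = g \<circ> f"
proof
  fix y
  have "f y \<notin> T" if "y \<in> S" using that assms permutes_in_image[OF assms(1)] by blast
  moreover have "g y \<notin> S" if "y \<in> T" using that assms permutes_in_image[OF assms(2)] by blast
  ultimately show "(f \<circ> g) y = (g \<circ> f) y"
    using assms by (cases "y \<in> S"; cases "y \<in> T") (auto simp: permutes_not_in)
qed

lemma has_order_disjoint_comp:
  assumes "f permutes S" "g permutes T" "S \<inter> T = {}"
    and "has_order f k" "g ^^ l = id" "l dvd k"
  shows "has_order (f \<circ> g) k"
proof -
  have pow: "(f \<circ> g) ^^ j = f ^^ j \<circ> g ^^ j" for j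
    using funpow_comp_commute[OF permutes_disjoint_commute[OF assms(1-3)]] .
  have "g ^^ k = id"
    using assms(5,6) by (metis dvdE funpow_mult id_funpow)
  moreover have "(f \<circ> g) ^^ j \<noteq> id" if fj: "f ^^ j \<noteq> id" for j
  proof
    assume fg: "(f \<circ> g) ^^ j = id"
    obtain y where y: "(f ^^ j) y \<noteq> y" using fj by (meson eq_id_iff)
    then have "y \<in> S" using permutes_not_in[OF permutes_funpow[OF assms(1)]] by metis
    then have "(g ^^ j) y = y"
      using assms(3) permutes_not_in[OF permutes_funpow[OF assms(2)]] by blast
    then show False using fg y pow by (metis comp_apply id_apply)
  qed
  ultimately show ?thesis
    using assms(4) pow by (auto simp: has_order_def)
qed

lemma sign_conj_transpose:
  assumes "permutation f"
  shows "sign (transpose x y \<circ> f \<circ> transpose x y) = sign f"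
  using assms by (simp add: sign_compose permutation_compose permutation_swap_id sign_swap_id)

lemma comp_transpose_eq_transpose_comp:
  assumes "bij f"
  shows "f \<circ> transpose x y = transpose (f x) (f y) \<circ> f"
  using transpose_comp_eq[OF assms, of "f x" "f y"] assms by (simp add: bij_is_inj)

section \<open>Cycles\<close>

lemma sign_cycle_of_list:
  assumes "distinct cs"
  shows "sign (cycle_of_list cs) = (-1) ^ (length cs - 1)"
  using assms
proof (induction cs rule: cycle_of_list.induct)
  case (1 i j cs)
  have "sign (cycle_of_list (i # j # cs)) = sign (transpose i j) * sign (cycle_of_list (j # cs))"
    by (simp add: sign_compose permutation_of_cycle permutation_swap_id)
  also have "\<dots> = (-1) ^ (length (i # j # cs) - 1)"
    using 1 by (simp add: sign_swap_id)
  finally show ?case .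
qed simp_all

lemma funpow_cycle_of_list_nth:
  assumes "distinct cs" "i < length cs"
  shows "(cycle_of_list cs ^^ j) (cs ! i) = cs ! ((i + j) mod length cs)"
proof -
  have "(cycle_of_list cs ^^ j) (cs ! i) = rotate j cs ! i"
    using cyclic_rotation[OF assms(1), of j] assms(2) by (metis nth_map)
  then show ?thesis
    using assms(2) by (simp add: nth_rotate add.commute)
qed

lemma cycle_of_list_nth:
  assumes "distinct cs" "i < length cs"
  shows "cycle_of_list cs (cs ! i) = cs ! (Suc i mod length cs)"
  using funpow_cycle_of_list_nth[OF assms, of 1] by simp

lemma has_order_cycle_of_list:
  assumes "distinct cs"
  shows "has_order (cycle_of_list cs) (length cs)"
proof -
  have "cycle_of_list cs ^^ j \<noteq> id" if "0 < j" "j < length cs" for j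
  proof
    assume "cycle_of_list cs ^^ j = id"
    moreover have "cs \<noteq> []"
      using that by auto
    ultimately have "cs ! j = cs ! 0"
      using funpow_cycle_of_list_nth[OF assms, of 0 j] that by simp
    then show False
      using assms that nth_eq_iff_index_eq by fastforce
  qed
  then show ?thesis
    using cycle_is_id_root[OF assms] by (simp add: has_order_def)
qed

lemma set_upt_atLeastAtMost: "set [i..<j+1] = {i..j}"
  by auto

lemma cycle_of_list_upt:
  assumes "0 < l"
  shows "cycle_of_list [m+1..<m+l+1] permutes {m+1..m+l}"
    "has_order (cycle_of_list [m+1..<m+l+1]) l"
    "sign (cycle_of_list [m+1..<m+l+1]) = (-1) ^ (l - 1)"
    "cycle_of_list [m+1..<m+l+1] (m + l) = m + 1"
proof -
  show "cycle_of_list [m+1..<m+l+1] permutes {m+1..m+l}"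
    using cycle_permutes[of "[m+1..<m+l+1]"] by (simp only: set_upt_atLeastAtMost)
  show "has_order (cycle_of_list [m+1..<m+l+1]) l"
    using has_order_cycle_of_list[of "[m+1..<m+l+1]"] by simp
  show "sign (cycle_of_list [m+1..<m+l+1]) = (-1) ^ (l - 1)"
    using sign_cycle_of_list[of "[m+1..<m+l+1]"] by simp
  show "cycle_of_list [m+1..<m+l+1] (m + l) = m + 1"
    using cycle_of_list_nth[of "[m+1..<m+l+1]" "l - 1"] assms by simp
qed

lemma comp_cycle_of_list_upt:
  assumes "f permutes {1..m}" "has_order f k" "0 < l" "l dvd k"
  shows "f \<circ> cycle_of_list [m+1..<m+l+1] permutes {1..m+l}"
    "has_order (f \<circ> cycle_of_list [m+1..<m+l+1]) k"
    "sign (f \<circ> cycle_of_list [m+1..<m+l+1]) = sign f * (-1) ^ (l - 1)"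
proof -
  note C = cycle_of_list_upt[OF assms(3), of m]
  have disj: "{1..m} \<inter> {m+1..m+l} = {}"
    by auto
  show "f \<circ> cycle_of_list [m+1..<m+l+1] permutes {1..m+l}"
    by (rule permutes_compose[OF permutes_subset[OF C(1)] permutes_subset[OF assms(1)]]) auto
  show "has_order (f \<circ> cycle_of_list [m+1..<m+l+1]) k"
    using has_order_disjoint_comp[OF assms(1) C(1) disj assms(2) _ assms(4)] C(2)
    by (simp add: has_order_def)
  show "sign (f \<circ> cycle_of_list [m+1..<m+l+1]) = sign f * (-1) ^ (l - 1)"
    using permutes_imp_permutation[OF _ assms(1)] C(3)
    by (simp add: sign_compose permutation_of_cycle)
qed

lemma cycle_of_list_comp_transpose:
  assumes "distinct cs" "x \<in> set cs" "y \<notin> set cs"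
  obtains cs' where "distinct cs'" "set cs' = insert y (set cs)" "length cs' = Suc (length cs)"
    "cycle_of_list cs \<circ> transpose x y = cycle_of_list cs'"
proof -
  obtain i where i: "i < length cs" "cs ! i = x"
    using assms(2) by (metis in_set_conv_nth)
  have ne: "cs \<noteq> []"
    using i by auto
  define rest where "rest = tl (rotate i cs)"
  have "hd (rotate i cs) = x"
    using i hd_rotate_conv_nth[OF ne, of i] by simp
  then have rot: "rotate i cs = x # rest"
    unfolding rest_def using ne by (metis list.collapse rotate_is_Nil_conv)
  have dist: "distinct (x # rest)" and set_rest: "set (x # rest) = set cs"
    using assms(1) by (simp_all flip: rot)
  have y_rest: "y \<notin> set (x # rest)"
    using set_rest assms(3) by simp
  have "cycle_of_list cs = cycle_of_list (x # rest)"
    using cycle_of_list_rotate_independent[OF assms(1), of i] rot by simp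
  moreover have "map (transpose x y) (x # rest) = y # rest"
    using dist y_rest by (auto intro!: map_idI simp: transpose_eq_iff)
  then have "transpose x y \<circ> cycle_of_list (x # rest) \<circ> transpose x y = cycle_of_list (y # rest)"
    using conjugation_of_cycle[OF dist, of "transpose x y"] by simp
  ultimately have "cycle_of_list cs \<circ> transpose x y = cycle_of_list (x # y # rest)"
    by (simp add: fun_eq_iff) (metis transpose_involutory)
  moreover have "distinct (x # y # rest)" "set (x # y # rest) = insert y (set cs)"
    using dist y_rest set_rest by auto
  moreover have "length (x # y # rest) = Suc (length cs)"
    using rot by (metis length_Cons length_rotate)
  ultimately show ?thesis
    using that by blast
qed

section \<open>Reachability\<close>

definition reach :: "('a \<Rightarrow> 'a) \<Rightarrow> ('a \<Rightarrow> 'a) \<Rightarrow> 'a \<Rightarrow> 'a \<Rightarrow> bool" where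
  "reach f g = (\<lambda>y z. z = f y \<or> z = g y)\<^sup>*\<^sup>*"

lemma reach_refl: "reach f g x x"
  by (simp add: reach_def)

lemma reach_trans: "reach f g x y \<Longrightarrow> reach f g y z \<Longrightarrow> reach f g x z"
  unfolding reach_def by (rule rtranclp_trans)

lemma reach_fst_step: "reach f g x (f x)"
  by (auto simp: reach_def)

lemma reach_snd_step: "reach f g x (g x)"
  by (auto simp: reach_def)

lemma reach_mono:
  assumes "\<And>y. reach f' g' y (f y)" "\<And>y. reach f' g' y (g y)" "reach f g x z"
  shows "reach f' g' x z"
  using assms(3) unfolding reach_def
proof (induction rule: rtranclp_induct)
  case (step y z)
  then have "reach f' g' y z"
    using assms(1,2) by blast
  with step(3) show ?case
    unfolding reach_def by (rule rtranclp_trans)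
qed simp

lemma reach_funpow:
  assumes "\<And>y. reach f g y (h y)"
  shows "reach f g x ((h ^^ j) x)"
  by (induction j) (auto intro: reach_refl reach_trans assms)

lemma reach_closed:
  assumes "reach f g x y" "x \<in> S" "f ` S \<subseteq> S" "g ` S \<subseteq> S"
  shows "y \<in> S"
  using assms(1,2) unfolding reach_def
  by (induction rule: rtranclp_induct) (use assms(3,4) in auto)

lemma reach_comp_disjoint:
  assumes "f permutes S" "h permutes T" "S \<inter> T = {}"
  shows "reach (f \<circ> h) g x (f x)" "reach (f \<circ> h) g x (h x)"
proof -
  have "(f \<circ> h) x = f x \<or> f x = x"
    using assms by (cases "x \<in> S") (auto simp: permutes_not_in disjoint_iff)
  then show "reach (f \<circ> h) g x (f x)"
    using reach_fst_step reach_refl by metis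
  have "(f \<circ> h) x = h x \<or> h x = x"
  proof (cases "x \<in> T")
    case True
    then have "h x \<notin> S"
      using assms(3) permutes_in_image[OF assms(2)] by blast
    then show ?thesis
      using permutes_not_in[OF assms(1)] by simp
  next
    case False
    then show ?thesis
      using permutes_not_in[OF assms(2)] by simp
  qed
  then show "reach (f \<circ> h) g x (h x)"
    using reach_fst_step reach_refl by metis
qed

lemma reach_cycle_of_list:
  assumes "distinct cs" "\<And>y. reach f g y (cycle_of_list cs y)"
    and "reach f g x (cs ! i)" "i < length cs" "y \<in> set cs"
  shows "reach f g x y"
proof -
  obtain j where j: "j < length cs" "y = cs ! j"
    using assms(5) by (metis in_set_conv_nth)
  have "(i + (j + length cs - i)) mod length cs = j"
    using assms(4) j(1) by simp
  then have "(cycle_of_list cs ^^ (j + length cs - i)) (cs ! i) = y"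
    using funpow_cycle_of_list_nth[OF assms(1,4)] j(2) by simp
  then show ?thesis
    using reach_trans[OF assms(3) reach_funpow[OF assms(2)]] by metis
qed

lemma reach_comp_cycle_of_list_upt:
  fixes a :: "nat \<Rightarrow> nat" and m l :: nat
  defines "C \<equiv> cycle_of_list [m+1..<m+l+1]"
  assumes "a permutes {1..m}" "0 < l" "x \<in> {1..m}" "g x = m + l"
    and "\<And>y. y \<in> {1..m} \<Longrightarrow> reach a c 1 y"
    and "\<And>u t. reach (a \<circ> C) c u t \<Longrightarrow> reach (a \<circ> C) g u t"
    and "y \<in> {1..m + l}"
  shows "reach (a \<circ> C) g 1 y"
proof -
  have disj: "{1..m} \<inter> {m+1..m+l} = {}"
    by auto
  note steps = reach_comp_disjoint[OF assms(2) cycle_of_list_upt(1)[of l m, OF assms(3), folded C_def] disj]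
  have old: "reach (a \<circ> C) g 1 w" if "w \<in> {1..m}" for w
    using assms(7)[OF reach_mono[OF steps(1) reach_snd_step assms(6)[OF that]]] .
  have "reach (a \<circ> C) g 1 ([m+1..<m+l+1] ! (l - 1))"
    using reach_trans[OF old[OF assms(4)] reach_snd_step] assms(3,5) by simp
  then have "reach (a \<circ> C) g 1 y" if "y \<in> set [m+1..<m+l+1]" for y
    using reach_cycle_of_list[of "[m+1..<m+l+1]" "a \<circ> C" g 1 "l - 1" y, folded C_def]
      steps(2) that assms(3) by simp
  then show ?thesis
    using assms(8) old by (cases "y \<le> m") (auto simp: set_upt_atLeastAtMost)
qed

text \<open>\<open>g \<circ> transpose x y\<close> splices the fixed point \<open>y\<close> of \<open>g\<close> into the cycle through \<open>x\<close>,
  so one step of \<open>g\<close> takes at most two steps of the new map.\<close>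
lemma reach_comp_transposeI:
  assumes "g y = y" "reach f g v w"
  shows "reach f (g \<circ> transpose x y) v w"
proof (rule reach_mono[OF reach_fst_step _ assms(2)])
  fix z
  let ?g' = "g \<circ> transpose x y"
  show "reach f ?g' z (g z)"
  proof (cases "z = x")
    case True
    then have "?g' z = y" "?g' y = g z"
      using assms(1) by auto
    then show ?thesis
      using reach_trans reach_snd_step by metis
  next
    case False
    then show ?thesis
      using assms(1) reach_snd_step[of f ?g' z] by (cases "z = y") (auto intro: reach_refl)
  qed
qed

lemma splice_cycle:
  fixes a :: "'a \<Rightarrow> 'a" and cs :: "'a list"
  defines "f \<equiv> a \<circ> cycle_of_list cs"
  assumes "bij f" "distinct cs" "x \<in> set cs" "y \<notin> set cs"
    and "w \<in> insert y (set cs)" "v \<notin> insert y (set cs)" "x \<noteq> w" "{w, v} = {f x, f y}"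
  obtains cs' where "distinct cs'" "set cs' = insert v (insert y (set cs))"
    "length cs' = length cs + 2"
    "a \<circ> cycle_of_list cs' = transpose w v \<circ> f \<circ> transpose w v"
    "cycle_of_list cs' x = y"
    "\<And>u t. reach a (cycle_of_list cs) u t \<Longrightarrow> reach a (cycle_of_list cs') u t"
proof -
  let ?c = "cycle_of_list cs"
  obtain cs1 where cs1: "distinct cs1" "set cs1 = insert y (set cs)" "length cs1 = Suc (length cs)"
    "?c \<circ> transpose x y = cycle_of_list cs1"
    using cycle_of_list_comp_transpose[OF assms(3-5)] by blast
  obtain cs2 where cs2: "distinct cs2" "set cs2 = insert v (set cs1)" "length cs2 = Suc (length cs1)"
    "cycle_of_list cs1 \<circ> transpose w v = cycle_of_list cs2"
    using cycle_of_list_comp_transpose[of cs1 w v] cs1 assms(6,7) by auto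
  have c2: "cycle_of_list cs2 = ?c \<circ> transpose x y \<circ> transpose w v"
    using cs1(4) cs2(4) by simp
  have v_new: "v \<noteq> x" "v \<noteq> y"
    using assms(4,7) by auto
  then have fixed: "?c y = y" "(?c \<circ> transpose x y) v = v"
    using assms(5,7) by (simp_all add: id_outside_supp)
  have "transpose w v = transpose (f x) (f y)"
    using assms(9) by (auto simp: doubleton_eq_iff transpose_commute)
  then have f_xy: "f \<circ> transpose x y = transpose w v \<circ> f"
    using comp_transpose_eq_transpose_comp[OF assms(2)] by simp
  have "a \<circ> cycle_of_list cs2 = f \<circ> transpose x y \<circ> transpose w v"
    unfolding c2 f_def by (simp add: comp_assoc)
  then have "a \<circ> cycle_of_list cs2 = transpose w v \<circ> f \<circ> transpose w v"
    unfolding f_xy .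
  moreover have "cycle_of_list cs2 x = y"
    using fixed v_new assms(8) unfolding c2 by auto
  moreover have "reach a (cycle_of_list cs2) u t" if "reach a ?c u t" for u t
    unfolding c2 using that fixed by (intro reach_comp_transposeI)
  ultimately show ?thesis
    using that cs1 cs2 by simp
qed

lemma gen2_bij:
  assumes "bij a" "bij b" "g \<in> gen2 a b"
  shows "bij g"
  using assms(3) by induction (use assms in \<open>auto simp del: id_apply o_apply intro: bij_comp bij_imp_bij_inv\<close>)

lemma reach_imp_gen2:
  assumes "reach a (inv a \<circ> b) x y"
  shows "\<exists>g\<in>gen2 a b. g x = y"
  using assms unfolding reach_def
proof (induction rule: rtranclp_induct)
  case base
  show ?case
    using gen2.gen_id by (metis id_apply)
next
  case (step y z)
  then obtain g where g: "g \<in> gen2 a b" "g x = y"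
    by blast
  have "a \<in> gen2 a b" "inv a \<circ> b \<in> gen2 a b"
    by (auto intro: gen2.intros)
  with g have "a \<circ> g \<in> gen2 a b" "(inv a \<circ> b) \<circ> g \<in> gen2 a b"
    by (auto intro: gen2.gen_comp)
  with step(2) g(2) show ?case
    by (metis comp_apply)
qed

lemma transitive_on_gen2I:
  assumes "bij a" "bij b" "\<And>y. y \<in> S \<Longrightarrow> reach a (inv a \<circ> b) x y"
  shows "transitive_on (gen2 a b) S"
  unfolding transitive_on_def
proof (intro ballI)
  fix i j
  assume "i \<in> S" "j \<in> S"
  then obtain gi gj where g: "gi \<in> gen2 a b" "gi x = i" "gj \<in> gen2 a b" "gj x = j"
    using assms(3) reach_imp_gen2 by metis
  then have "inv gi i = x"
    using gen2_bij[OF assms(1,2) g(1)] by (auto simp: bij_is_inj)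
  then show "\<exists>g\<in>gen2 a b. g i = j"
    using g by (intro bexI[of _ "gj \<circ> inv gi"]) (auto intro: gen2.intros)
qed

section \<open>Admissible configurations\<close>

text \<open>In an admissible configuration on \<open>{1..m}\<close>, \<open>inv a \<circ> b\<close> is the cycle \<open>cs\<close> and
  \<open>\<beta>\<close> counts the points it fixes. The last clause provides the point at which a new cycle
  of \<open>a\<close> is spliced into \<open>cs\<close>.\<close>
definition admissible ::
    "nat \<Rightarrow> nat \<Rightarrow> int \<Rightarrow> nat \<Rightarrow> (nat \<Rightarrow> nat) \<Rightarrow> (nat \<Rightarrow> nat) \<Rightarrow> nat list \<Rightarrow> bool" where
  "admissible k m \<sigma> \<beta> a b cs \<longleftrightarrow>
     a permutes {1..m} \<and> b permutes {1..m} \<and> has_order a k \<and> has_order b k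
     \<and> sign a = \<sigma> \<and> sign b = \<sigma> \<and> a \<circ> cycle_of_list cs = b
     \<and> distinct cs \<and> set cs \<subseteq> {1..m} \<and> 1 \<in> set cs \<and> length cs + \<beta> = m
     \<and> (\<forall>y\<in>{1..m}. reach a (cycle_of_list cs) 1 y)
     \<and> (\<exists>x\<in>set cs. b x \<in> set cs \<and> b x \<noteq> x)"

definition realizable :: "nat \<Rightarrow> nat \<Rightarrow> int \<Rightarrow> nat \<Rightarrow> bool" where
  "realizable k m \<sigma> \<beta> \<longleftrightarrow> (\<exists>a b cs. admissible k m \<sigma> \<beta> a b cs)"

lemma admissible_solution:
  assumes adm: "admissible k n \<sigma> \<beta> a b cs" and "0 < k"
  shows "a permutes {1..n} \<and> b permutes {1..n}
           \<and> perm_order a = k \<and> perm_order b = k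
           \<and> sign a = \<sigma> \<and> sign b = \<sigma>
           \<and> transitive_on (gen2 a b) {1..n}
           \<and> is_cycle_perm (inv a \<circ> b)"
proof -
  note A = adm[unfolded admissible_def]
  have "bij a" "bij b"
    using A permutes_bij by blast+
  then have cyc: "inv a \<circ> b = cycle_of_list cs"
    using A by (auto simp: comp_assoc[symmetric] bij_is_inj)
  obtain x where "x \<in> set cs" "b x \<in> set cs" "b x \<noteq> x"
    using A by blast
  then have "card {x, b x} \<le> card (set cs)"
    by (intro card_mono) auto
  then have "2 \<le> length cs"
    using \<open>b x \<noteq> x\<close> A by (simp add: distinct_card)
  then have "is_cycle_perm (inv a \<circ> b)"
    unfolding is_cycle_perm_def using cyc A by blast
  moreover have "transitive_on (gen2 a b) {1..n}"
    using transitive_on_gen2I[OF \<open>bij a\<close> \<open>bij b\<close>] cyc A by auto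
  ultimately show ?thesis
    using A assms(2) perm_order_eqI by auto
qed

lemma realizable_single_cycle:
  assumes "3 \<le> k"
  shows "realizable k k ((-1) ^ (k - 1)) (k - 3)"
proof -
  define a where "a = cycle_of_list [1..<k+1]"
  define b where "b = transpose 2 3 \<circ> a \<circ> transpose 2 3"
  have perm_a: "a permutes {1..k}"
    unfolding a_def using cycle_permutes[of "[1..<k+1]"] by (simp only: set_upt_atLeastAtMost)
  then have perm_b: "b permutes {1..k}"
    unfolding b_def using assms
    by (intro permutes_compose permutes_swap_id) auto
  have "has_order a (length [1..<k+1])"
    unfolding a_def by (rule has_order_cycle_of_list) simp
  then have order: "has_order a k" "has_order b k"
    unfolding b_def by (simp_all add: has_order_conj_involution)
  have "sign a = (-1) ^ (length [1..<k+1] - 1)"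
    unfolding a_def by (rule sign_cycle_of_list) simp
  then have sign: "sign a = (-1) ^ (k - 1)" "sign b = (-1) ^ (k - 1)"
    unfolding b_def using permutes_imp_permutation[OF _ perm_a] by (simp_all add: sign_conj_transpose)
  have a12: "a 1 = 2" "a 2 = 3"
    unfolding a_def using cycle_of_list_nth[of "[1..<k+1]" 0] cycle_of_list_nth[of "[1..<k+1]" 1] assms
    by (auto simp: numeral_2_eq_2 numeral_3_eq_3)
  have "a \<circ> transpose 1 2 = transpose 2 3 \<circ> a"
    using comp_transpose_eq_transpose_comp[OF permutes_bij[OF perm_a], of 1 2] a12 by simp
  then have "a \<circ> cycle_of_list [1, 2, 3] = b"
    unfolding b_def by (simp flip: comp_assoc)
  moreover have "reach a (cycle_of_list [1, 2, 3]) 1 y" if "y \<in> {1..k}" for y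
    using reach_cycle_of_list[of "[1..<k+1]" a, of "cycle_of_list [1, 2, 3]" 1 0 y] that assms
    by (auto simp: reach_fst_step reach_refl a_def)
  moreover have "b 1 = 3"
    using perm_a a12 by (simp add: b_def)
  ultimately have "admissible k k ((-1) ^ (k - 1)) (k - 3) a b [1, 2, 3]"
    unfolding admissible_def using perm_a perm_b order sign assms by auto
  then show ?thesis
    unfolding realizable_def by blast
qed

lemma realizable_3_5: "realizable 3 5 1 0"
proof -
  define a where "a = cycle_of_list [1, 2, 3 :: nat]"
  define b where "b = cycle_of_list [3, 4, 5 :: nat]"
  define cs where "cs = [3, 4, 5, 2, 1 :: nat]"
  define c where "c = cycle_of_list cs"
  have "a permutes {1..5}" "b permutes {1..5}"
    unfolding a_def b_def by (intro permutes_subset[OF cycle_permutes]; auto)+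
  moreover have "has_order a 3" "has_order b 3"
  proof -
    have "has_order a (length [1, 2, 3 :: nat])" "has_order b (length [3, 4, 5 :: nat])"
      unfolding a_def b_def by (rule has_order_cycle_of_list, simp)+
    then show "has_order a 3" "has_order b 3"
      by (simp_all add: numeral_3_eq_3)
  qed
  moreover have "sign a = (-1) ^ (length [1, 2, 3 :: nat] - 1)"
    "sign b = (-1) ^ (length [3, 4, 5 :: nat] - 1)"
    unfolding a_def b_def by (rule sign_cycle_of_list, simp)+
  moreover have "a \<circ> c = b"
    unfolding a_def b_def c_def cs_def by (auto simp: fun_eq_iff transpose_def)
  moreover have "reach a c 1 y" if "y \<in> {1..5}" for y
  proof -
    have "y \<in> set cs"
      using that unfolding cs_def by simp presburger
    then show ?thesis
      using reach_cycle_of_list[of cs a c 1 4 y, folded c_def]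
      by (auto simp: cs_def reach_snd_step reach_refl)
  qed
  moreover have "b 3 = 4"
    unfolding b_def by simp
  ultimately have "admissible 3 5 1 0 a b cs"
    unfolding admissible_def c_def[symmetric] by (auto simp: cs_def)
  then show ?thesis
    unfolding realizable_def by blast
qed

lemma admissible_escape:
  assumes "admissible k m \<sigma> \<beta> a b cs" "0 < \<beta>"
  shows "\<exists>x\<in>set cs. b x \<notin> set cs"
proof (rule ccontr)
  note A = assms(1)[unfolded admissible_def]
  assume "\<not> (\<exists>x\<in>set cs. b x \<notin> set cs)"
  then have "b ` set cs \<subseteq> set cs"
    by auto
  moreover have c_image: "cycle_of_list cs ` set cs = set cs"
    using cycle_is_surj A by blast
  ultimately have "a ` set cs \<subseteq> set cs"
    using A by (metis image_comp)
  then have "{1..m} \<subseteq> set cs"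
    using A reach_closed[of a "cycle_of_list cs" 1 _ "set cs"] c_image by blast
  then have "card {1..m} \<le> card (set cs)"
    by (intro card_mono) auto
  then have "m \<le> length cs"
    using A by (simp add: distinct_card)
  then show False
    using A assms(2) by simp
qed

lemma admissible_add_fixed_point:
  assumes adm: "admissible k m \<sigma> \<beta> a b cs" and "0 < \<beta>"
  shows "realizable k (m + 1) \<sigma> (\<beta> - 1)"
proof -
  note A = adm[unfolded admissible_def]
  have perm_a: "a permutes {1..m}" and perm_b: "b permutes {1..m}"
    and ab: "a \<circ> cycle_of_list cs = b" and set_cs: "set cs \<subseteq> {1..m}"
    and "has_order a k" "has_order b k" "sign a = \<sigma>" "sign b = \<sigma>"
    and reach_old: "\<forall>y\<in>{1..m}. reach a (cycle_of_list cs) 1 y"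
    and "1 \<in> set cs" "length cs + \<beta> = m"
    using A by blast+
  obtain x where x: "x \<in> set cs" "b x \<notin> set cs"
    using admissible_escape[OF assms] by blast
  define q where "q = b x"
  define z where "z = m + 1"
  define b' where "b' = transpose z q \<circ> b \<circ> transpose z q"
  have x_in: "x \<in> {1..m}"
    using x set_cs by blast
  then have q_in: "q \<in> {1..m}"
    using permutes_in_image[OF perm_b] unfolding q_def by blast
  have "b z = z"
    using permutes_not_in[OF perm_b] unfolding z_def by simp
  moreover have "z \<notin> set cs" "q \<notin> insert z (set cs)" "x \<noteq> z" "x \<noteq> q"
    using x set_cs q_in x_in unfolding z_def q_def by auto
  ultimately obtain cs' where cs': "distinct cs'" "set cs' = insert q (insert z (set cs))"
    "length cs' = length cs + 2" "a \<circ> cycle_of_list cs' = b'" "cycle_of_list cs' x = z"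
    "\<And>u t. reach a (cycle_of_list cs) u t \<Longrightarrow> reach a (cycle_of_list cs') u t"
    using splice_cycle[of a cs x z z q] A permutes_bij[OF perm_b] x
    unfolding ab q_def b'_def by (auto simp: insert_commute)
  have reach_new: "\<forall>y\<in>{1..m + 1}. reach a (cycle_of_list cs') 1 y"
  proof
    fix y
    assume y: "y \<in> {1..m + 1}"
    have old: "reach a (cycle_of_list cs') 1 w" if "w \<in> {1..m}" for w
      using reach_old cs'(6) that by blast
    then have "reach a (cycle_of_list cs') 1 z"
      using reach_trans[OF old[OF x_in] reach_snd_step] cs'(5) by metis
    then show "reach a (cycle_of_list cs') 1 y"
      using y old unfolding z_def by (cases "y \<le> m") (auto simp: le_Suc_eq)
  qed
  have "b' x = z"
    using \<open>x \<noteq> z\<close> \<open>x \<noteq> q\<close> unfolding b'_def q_def by simp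
  then have witness: "\<exists>x\<in>set cs'. b' x \<in> set cs' \<and> b' x \<noteq> x"
    using x(1) cs'(2) \<open>x \<noteq> z\<close> by (intro bexI[of _ x]) auto
  have "transpose z q permutes {1..m + 1}"
    using q_in unfolding z_def by (intro permutes_swap_id) auto
  moreover have "b permutes {1..m + 1}"
    using perm_b by (rule permutes_subset) auto
  ultimately have b': "b' permutes {1..m + 1}" "has_order b' k" "sign b' = \<sigma>"
    using \<open>has_order b k\<close> \<open>sign b = \<sigma>\<close> permutes_imp_permutation[OF _ perm_b]
    unfolding b'_def
    by (auto intro: permutes_compose simp: has_order_conj_involution sign_conj_transpose)
  have "a permutes {1..m + 1}"
    using perm_a by (rule permutes_subset) auto
  moreover have "set cs' \<subseteq> {1..m + 1}" "1 \<in> set cs'" "length cs' + (\<beta> - 1) = m + 1"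
    using \<open>1 \<in> set cs\<close> \<open>length cs + \<beta> = m\<close> cs'(2,3) set_cs q_in assms(2)
    unfolding z_def by auto
  ultimately have "admissible k (m + 1) \<sigma> (\<beta> - 1) a b' cs'"
    unfolding admissible_def using \<open>has_order a k\<close> \<open>sign a = \<sigma>\<close> b' cs'(1,4) reach_new witness
    by blast
  then show ?thesis
    unfolding realizable_def by blast
qed

lemma admissible_add_cycle:
  assumes adm: "admissible k m \<sigma> \<beta> a b cs" and "2 \<le> l" "l dvd k"
  shows "realizable k (m + l) (\<sigma> * (-1) ^ (l - 1)) (\<beta> + (l - 2))"
proof -
  note A = adm[unfolded admissible_def]
  have perm_a: "a permutes {1..m}" and perm_b: "b permutes {1..m}"
    and ab: "a \<circ> cycle_of_list cs = b" and set_cs: "set cs \<subseteq> {1..m}"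
    and "has_order a k" "has_order b k" "sign a = \<sigma>" "sign b = \<sigma>"
    and reach_old: "\<forall>y\<in>{1..m}. reach a (cycle_of_list cs) 1 y"
    and "1 \<in> set cs" "length cs + \<beta> = m"
    using A by blast+
  obtain x where x: "x \<in> set cs" "b x \<in> set cs" "b x \<noteq> x"
    using A by blast
  define C where "C = cycle_of_list [m+1..<m+l+1]"
  define q where "q = b x"
  define u where "u = m + 1"
  define u' where "u' = m + l"
  have C: "C permutes {m+1..m+l}" "C u' = u"
    unfolding C_def u_def u'_def using cycle_of_list_upt[of l m] assms(2) by auto
  have disj: "{1..m} \<inter> {m+1..m+l} = {}"
    by auto
  have "cycle_of_list cs permutes {1..m}"
    using cycle_permutes set_cs by (rule permutes_subset)
  then have "C \<circ> cycle_of_list cs = cycle_of_list cs \<circ> C"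
    using permutes_disjoint_commute[OF C(1)] disj by blast
  then have aC_c: "a \<circ> C \<circ> cycle_of_list cs = b \<circ> C"
    by (simp add: comp_assoc flip: ab)
  have bC: "(b \<circ> C) x = q" "(b \<circ> C) u' = u"
    using x set_cs C(2) permutes_not_in[OF C(1)] permutes_not_in[OF perm_b]
    unfolding q_def u_def by auto
  have "bij (b \<circ> C)"
    using perm_b C(1) by (simp add: bij_comp permutes_bij)
  moreover have "u' \<notin> set cs" "q \<in> insert u' (set cs)" "u \<notin> insert u' (set cs)" "x \<noteq> q"
    using x set_cs assms(2) unfolding u_def u'_def q_def by auto
  ultimately obtain cs' where cs': "distinct cs'" "set cs' = insert u (insert u' (set cs))"
    "length cs' = length cs + 2"
    "a \<circ> C \<circ> cycle_of_list cs' = transpose q u \<circ> (b \<circ> C) \<circ> transpose q u"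
    "cycle_of_list cs' x = u'"
    "\<And>v t. reach (a \<circ> C) (cycle_of_list cs) v t \<Longrightarrow> reach (a \<circ> C) (cycle_of_list cs') v t"
    using splice_cycle[of "a \<circ> C" cs x u' q u, unfolded aC_c bC] A x(1) by blast
  have reach_new: "\<forall>y\<in>{1..m + l}. reach (a \<circ> C) (cycle_of_list cs') 1 y"
  proof
    fix y
    assume "y \<in> {1..m + l}"
    moreover have "x \<in> {1..m}"
      using x(1) set_cs by blast
    ultimately show "reach (a \<circ> C) (cycle_of_list cs') 1 y"
      using reach_comp_cycle_of_list_upt[where a = a and m = m and l = l and x = x
          and g = "cycle_of_list cs'" and c = "cycle_of_list cs"]
        perm_a cs'(5) reach_old cs'(6) assms(2) unfolding C_def u'_def by simp
  qed
  define b' where "b' = transpose q u \<circ> (b \<circ> C) \<circ> transpose q u"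
  have "x \<noteq> u"
    using x(1) \<open>u \<notin> insert u' (set cs)\<close> by blast
  then have "b' x = u"
    unfolding b'_def using bC(1) \<open>x \<noteq> q\<close> by simp
  then have witness: "\<exists>x\<in>set cs'. b' x \<in> set cs' \<and> b' x \<noteq> x"
    using x(1) cs'(2) \<open>x \<noteq> u\<close> by (intro bexI[of _ x]) auto
  note extend = comp_cycle_of_list_upt[of _ m k l, folded C_def]
  have a': "a \<circ> C permutes {1..m + l}" "has_order (a \<circ> C) k" "sign (a \<circ> C) = \<sigma> * (-1) ^ (l - 1)"
    using extend[OF perm_a] \<open>has_order a k\<close> \<open>sign a = \<sigma>\<close> assms(2,3) by auto
  have bC': "b \<circ> C permutes {1..m + l}" "has_order (b \<circ> C) k" "sign (b \<circ> C) = \<sigma> * (-1) ^ (l - 1)"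
    using extend[OF perm_b] \<open>has_order b k\<close> \<open>sign b = \<sigma>\<close> assms(2,3) by auto
  have "transpose q u permutes {1..m + l}"
    using x set_cs assms(2) unfolding q_def u_def by (intro permutes_swap_id) auto
  then have b': "b' permutes {1..m + l}" "has_order b' k" "sign b' = \<sigma> * (-1) ^ (l - 1)"
    using bC' permutes_imp_permutation[OF _ bC'(1)] unfolding b'_def
    by (auto intro: permutes_compose simp: has_order_conj_involution sign_conj_transpose)
  have "set cs' \<subseteq> {1..m + l}" "1 \<in> set cs'" "length cs' + (\<beta> + (l - 2)) = m + l"
    using \<open>1 \<in> set cs\<close> \<open>length cs + \<beta> = m\<close> cs'(2,3) set_cs assms(2)
    unfolding u_def u'_def by auto
  then have "admissible k (m + l) (\<sigma> * (-1) ^ (l - 1)) (\<beta> + (l - 2)) (a \<circ> C) b' cs'"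
    unfolding admissible_def using a' b' cs'(1) cs'(4)[folded b'_def] reach_new witness by blast
  then show ?thesis
    unfolding realizable_def by blast
qed

section \<open>Counting\<close>

lemma realizable_add_cycles:
  assumes "realizable k m \<sigma> \<beta>" "2 \<le> l" "l dvd k"
  shows "realizable k (m + j * l) (\<sigma> * (-1) ^ (j * (l - 1))) (\<beta> + j * (l - 2))"
proof (induction j)
  case 0
  then show ?case
    using assms(1) by simp
next
  case (Suc j)
  then have "realizable k (m + j * l + l) (\<sigma> * (-1) ^ (j * (l - 1)) * (-1) ^ (l - 1))
      (\<beta> + j * (l - 2) + (l - 2))"
    using admissible_add_cycle[OF _ assms(2,3)] unfolding realizable_def by blast
  then show ?case
    by (simp add: ac_simps power_add)
qed

lemma realizable_add_fixed_points:
  assumes "realizable k m \<sigma> \<beta>" "j \<le> \<beta>"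
  shows "realizable k (m + j) \<sigma> (\<beta> - j)"
  using assms(2)
proof (induction j)
  case 0
  then show ?case
    using assms(1) by simp
next
  case (Suc j)
  then have "realizable k (m + j + 1) \<sigma> (\<beta> - j - 1)"
    using admissible_add_fixed_point unfolding realizable_def by fastforce
  then show ?case
    by simp
qed

lemma realizable_fill:
  assumes "realizable k m \<sigma> \<beta>" "m \<le> n" "n - m \<le> \<beta>"
  shows "\<exists>\<beta>'. realizable k n \<sigma> \<beta>'"
  using realizable_add_fixed_points[OF assms(1,3)] assms(2) by auto

lemma realizable_cycles:
  assumes "3 \<le> k" "1 \<le> q"
  shows "realizable k (q * k) ((-1) ^ (q * (k - 1))) (k - 3 + (q - 1) * (k - 2))"
proof -
  obtain p where q: "q = Suc p"
    using assms(2) by (cases q) auto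
  have "realizable k (k + p * k) ((-1) ^ (k - 1) * (-1) ^ (p * (k - 1))) (k - 3 + p * (k - 2))"
    using realizable_add_cycles[OF realizable_single_cycle[OF assms(1)]] assms(1) by simp
  then show ?thesis
    unfolding q by (simp add: power_add)
qed

lemma two_le_div:
  fixes k n :: nat
  assumes "0 < k" "2 * k \<le> n"
  shows "2 \<le> n div k"
  using div_le_mono[OF assms(2), of k] assms(1) by simp

lemma realizable_3_mod_3_eq_2:
  assumes "n mod 3 = 2" "6 \<le> n"
  shows "\<exists>\<beta>. realizable 3 n 1 \<beta>"
proof -
  have "realizable 3 (5 + (n div 3 - 1) * 3) 1 (n div 3 - 1)"
    using realizable_add_cycles[OF realizable_3_5, of 3 "n div 3 - 1"]
    by (simp add: minus_one_power_iff)
  moreover have "5 + (n div 3 - 1) * 3 = n"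
    using assms two_le_div[of 3 n] div_mult_mod_eq[of n 3] by simp
  ultimately show ?thesis
    by auto
qed

lemma realizable_sign_of_cycles:
  assumes "3 \<le> k" "2 * k \<le> n" "\<not> (k = 3 \<and> n mod k = 2)"
  shows "\<exists>\<beta>. realizable k n ((-1) ^ (n div k * (k - 1))) \<beta>"
proof -
  define q where "q = n div k"
  have "2 \<le> q"
    using two_le_div assms(1,2) unfolding q_def by simp
  have "n mod k \<le> k - 3 + (q - 1) * (k - 2)"
  proof (cases "k = 3")
    case False
    have "1 * (k - 2) \<le> (q - 1) * (k - 2)"
      using \<open>2 \<le> q\<close> by (intro mult_le_mono1) simp
    then show ?thesis
      using False assms(1) mod_less_divisor[of k n] by linarith
  qed (use assms(3) mod_less_divisor[of 3 n] \<open>2 \<le> q\<close> in auto)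
  moreover have "q * k \<le> n" "n - q * k = n mod k"
    unfolding q_def by (simp_all add: minus_div_mult_eq_mod)
  ultimately show ?thesis
    using realizable_fill[OF realizable_cycles[OF assms(1), of q]] \<open>2 \<le> q\<close>
    unfolding q_def by simp
qed

lemma realizable_even_other_sign:
  assumes "even k" "3 \<le> k" "2 * k \<le> n"
  shows "\<exists>\<beta>. realizable k n (- ((-1) ^ (n div k))) \<beta>"
proof -
  define q where "q = n div k"
  define r where "r = n mod k"
  have n: "n = q * k + r" and "r < k" and "4 \<le> k"
    using assms unfolding q_def r_def by (simp_all, presburger)
  have "2 \<le> q"
    using two_le_div assms(2,3) unfolding q_def by simp
  have sign_cycles: "(-1 :: int) ^ (j * (k - 1)) = (-1) ^ j" for j
    using assms(1,2) by (simp add: minus_one_power_iff)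
  show ?thesis
  proof (cases "2 \<le> r")
    case True
    have "realizable k (q * k) ((-1) ^ q) (k - 3 + (q - 1) * (k - 2))"
      using realizable_cycles[OF assms(2), of q] \<open>2 \<le> q\<close> unfolding sign_cycles by simp
    then have "realizable k (q * k + 1 * 2) ((-1) ^ q * (-1) ^ (1 * (2 - 1)))
        (k - 3 + (q - 1) * (k - 2) + 1 * (2 - 2))"
      by (rule realizable_add_cycles) (use assms(1) in auto)
    then have "realizable k (q * k + 2) (- ((-1) ^ q)) (k - 3 + (q - 1) * (k - 2))"
      by simp
    then show ?thesis
      unfolding q_def by (rule realizable_fill) (use True n \<open>r < k\<close> in \<open>auto simp: q_def\<close>)
  next
    case False
    obtain p where q: "q = p + 2"
      using \<open>2 \<le> q\<close> le_Suc_ex by (metis add.commute)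
    have "realizable k ((p + 1) * k) ((-1) ^ (p + 1)) (k - 3 + p * (k - 2))"
      using realizable_cycles[OF assms(2), of "p + 1"] unfolding sign_cycles by simp
    then have "realizable k ((p + 1) * k + 2 * 2) ((-1) ^ (p + 1) * (-1) ^ (2 * (2 - 1)))
        (k - 3 + p * (k - 2) + 2 * (2 - 2))"
      by (rule realizable_add_cycles) (use assms(1) in auto)
    then have "realizable k ((p + 1) * k + 4) (- ((-1) ^ q)) (k - 3 + p * (k - 2))"
      using q by simp
    moreover have "(p + 1) * k + 4 \<le> n" "n - ((p + 1) * k + 4) \<le> k - 3 + p * (k - 2)"
      using False n q \<open>4 \<le> k\<close> by (simp_all add: distrib_right)
    ultimately show ?thesis
      unfolding q_def by (rule realizable_fill)
  qed
qed

lemma realizable_exists: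
  assumes "s \<in> {1, -1}" "3 \<le> k" "odd k \<longrightarrow> s = 1" "2 * k \<le> n"
  shows "\<exists>\<beta>. realizable k n s \<beta>"
proof -
  have "even (k - 1) \<longleftrightarrow> odd k"
    using assms(2) by presburger
  then have "(-1 :: int) ^ (n div k * (k - 1)) = (if even k then (-1) ^ (n div k) else 1)"
    by (simp add: mult.commute[of "n div k"] power_mult minus_one_power_iff)
  then consider "k = 3" "n mod k = 2" | "s = (-1) ^ (n div k * (k - 1))" "\<not> (k = 3 \<and> n mod k = 2)"
    | "even k" "s = - ((-1) ^ (n div k))"
    using assms(1,3) by (cases "even k"; cases "even (n div k)") auto
  then show ?thesis
    using realizable_3_mod_3_eq_2 realizable_sign_of_cycles realizable_even_other_sign assms
    by cases auto
qed

theorem claim2p4: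
  fixes n k :: nat and s :: int
  assumes "s \<in> {1, -1}"
    and "3 \<le> k" and "k \<le> n"
    and "odd k \<longrightarrow> s = 1"
    and "(n, k, s) \<noteq> (6, 6, 1)"
    and "2 * k \<le> n"
  shows "\<exists>a b. a permutes {1..n} \<and> b permutes {1..n}
           \<and> perm_order a = k \<and> perm_order b = k
           \<and> sign a = s \<and> sign b = s
           \<and> transitive_on (gen2 a b) {1..n}
           \<and> is_cycle_perm (inv a \<circ> b)"
proof -
  \<comment> \<open>\<open>k \<le> n\<close> and \<open>(n, k, s) \<noteq> (6, 6, 1)\<close> are implied by \<open>2 * k \<le> n\<close>.\<close>
  obtain \<beta> a b cs where "admissible k n s \<beta> a b cs"
    using realizable_exists[OF assms(1,2,4,6)] unfolding realizable_def by blast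
  then show ?thesis
    using admissible_solution assms(2) by fastforce
qed

end
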